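(* Let $\mathfrak g$ be of type $A_n$, $i\in I$ and $b\in\mathcal B(\infty)$. If $m_i^\ast(b)=1$, then for $1\le s\le i$, $\Sigma^\ast_s(\widetilde f_i^\ast(b))=\Sigma^\ast_s(b)+1$ if $s=1$ and $\Sigma^\ast_s(\widetilde f_i^\ast(b))=\Sigma^\ast_s(b)$ otherwise. If $m_i^\ast(b)=k$ for some $k\ge2$, then $\Sigma^\ast_s(\widetilde f_i^\ast(b))$ equals $\Sigma^\ast_s(b)+2$ if $s<k$, $\Sigma^\ast_s(b)+1$ if $s=k$, and $\Sigma^\ast_s(b)$ if $s>k$. In particular $\Sigma^\ast_k(\widetilde f_i^\ast(b))=\Sigma^\ast_k(b)+1$ for $k=m_i^\ast(b)$.
   Context: $I=\{1,\dots,n\}$. $\mathcal I=\{(s,t)\in\mathbb Z_{>0}\times I:s+t\le n+1\}$; $\mathcal B(\infty)$ is the set of $b=(b_{s,t})_{(s,t)\in\mathcal I}\in\mathbb Z_{\ge0}^{\mathcal I}$ with $b_{1,k}\ge b_{2,k-1}\ge\dots\ge b_{k,1}$ for $1\le k\le n$. Convention: $b_{s,t}=0$, $\mathbf e_{s,t}=0$ for $(s,t)\notin\mathcal I$. $\partial^\ast_{s,t}(b)=b_{s-1,t}-b_{s-1,t+1}-b_{s,t-1}+b_{s,t}$. For $1\le k\le i$: $\Sigma^\ast_k(b)=\sum_{t=1}^k\partial^\ast_{t,i+1-t}(b)$; $m_i^\ast(b)$ is the smallest $k$ with $\Sigma_k^\ast(b)=\max_{1\le l\le i}\Sigma^\ast_l(b)$.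 $\widetilde f_i^\ast(b)=b+\sum_{t=1}^{m_i^\ast(b)}(\mathbf e_{t,i+1-t}-\mathbf e_{t-1,i+1-t})$. *)

theory Defs
  imports Main
begin

text \<open>Index set I_cal = {(s,t) : s > 0, 1 <= t <= n, s + t <= n + 1}.
  Elements b of B(infinity) are modelled as functions nat => nat => int,
  required to vanish outside I_cal.\<close>

definition inI :: "nat \<Rightarrow> nat \<Rightarrow> nat \<Rightarrow> bool" where
  "inI n s t \<longleftrightarrow> 0 < s \<and> 1 \<le> t \<and> t \<le> n \<and> s + t \<le> n + 1"

definition bv :: "nat \<Rightarrow> (nat \<Rightarrow> nat \<Rightarrow> int) \<Rightarrow> nat \<Rightarrow> nat \<Rightarrow> int" where
  "bv n b s t = (if inI n s t then b s t else 0)"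

definition Binf :: "nat \<Rightarrow> (nat \<Rightarrow> nat \<Rightarrow> int) set" where
  "Binf n = {b. (\<forall>s t. \<not> inI n s t \<longrightarrow> b s t = 0)
              \<and> (\<forall>s t. inI n s t \<longrightarrow> 0 \<le> b s t)
              \<and> (\<forall>k j. 1 \<le> k \<and> k \<le> n \<and> 1 \<le> j \<and> j < k \<longrightarrow>
                        b (j + 1) (k - j) \<le> b j (k + 1 - j))}"

definition partial_star :: "nat \<Rightarrow> (nat \<Rightarrow> nat \<Rightarrow> int) \<Rightarrow> nat \<Rightarrow> nat \<Rightarrow> int" where
  "partial_star n b s t =
     bv n b (s - 1) t - bv n b (s - 1) (t + 1) - bv n b s (t - 1) + bv n b s t"

definition Sigma_star :: "nat \<Rightarrow> nat \<Rightarrow> (nat \<Rightarrow> nat \<Rightarrow> int) \<Rightarrow> nat \<Rightarrow> int" where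
  "Sigma_star n i b k = (\<Sum>t = 1..k. partial_star n b t (i + 1 - t))"

definition m_star :: "nat \<Rightarrow> nat \<Rightarrow> (nat \<Rightarrow> nat \<Rightarrow> int) \<Rightarrow> nat" where
  "m_star n i b = (LEAST k. 1 \<le> k \<and> k \<le> i \<and>
       Sigma_star n i b k = Max ((\<lambda>l. Sigma_star n i b l) ` {1..i}))"

definition unit_e :: "nat \<Rightarrow> nat \<Rightarrow> nat \<Rightarrow> nat \<Rightarrow> nat \<Rightarrow> int" where
  "unit_e n s t = (\<lambda>s' t'. if inI n s t \<and> s' = s \<and> t' = t then 1 else 0)"

definition f_star :: "nat \<Rightarrow> nat \<Rightarrow> (nat \<Rightarrow> nat \<Rightarrow> int) \<Rightarrow> nat \<Rightarrow> nat \<Rightarrow> int" where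
  "f_star n i b = (\<lambda>s' t'. b s' t' + (\<Sum>t = 1..m_star n i b.
       unit_e n t (i + 1 - t) s' t' - unit_e n (t - 1) (i + 1 - t) s' t'))"

end

theory Submission
  imports Defs
begin

text \<open>Write \<open>m = m\<^sup>*\<^sub>i(b)\<close>. The change \<open>f\<^sup>*\<^sub>i(b) - b\<close> is \<open>+1\<close> on \<open>(t, i+1-t)\<close> and \<open>-1\<close> on
  \<open>(t-1, i+1-t)\<close> for \<open>t \<le> m\<close>, independently of \<open>b\<close>, so every \<open>\<partial>\<^sup>*(t, i+1-t)\<close> is shifted by a
  constant depending only on \<open>t\<close> and \<open>m\<close>: for \<open>m = 1\<close> by \<open>+1\<close> at \<open>t = 1\<close> and \<open>-1\<close> at \<open>t = 2\<close>;
  for \<open>m \<ge> 2\<close> by \<open>+2\<close> at \<open>t = 1\<close> and \<open>-1\<close> at \<open>t = m\<close> and \<open>t = m+1\<close>. Summing over \<open>t \<le> s\<close>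
  gives the claim.\<close>

definition f_string :: "nat \<Rightarrow> nat \<Rightarrow> nat \<Rightarrow> (nat \<Rightarrow> nat \<Rightarrow> int) \<Rightarrow> nat \<Rightarrow> nat \<Rightarrow> int" where
  "f_string n i m b = (\<lambda>s' t'. b s' t' + (\<Sum>t = 1..m.
       unit_e n t (i + 1 - t) s' t' - unit_e n (t - 1) (i + 1 - t) s' t'))"

lemma f_star_eq_f_string: "f_star n i b = f_string n i (m_star n i b) b"
  unfolding f_star_def f_string_def ..

definition f_string_delta :: "nat \<Rightarrow> nat \<Rightarrow> nat \<Rightarrow> nat \<Rightarrow> nat \<Rightarrow> int" where
  "f_string_delta n i m s t =
     (if 1 \<le> s \<and> s \<le> m \<and> t = i + 1 - s \<and> inI n s t then 1 else 0)
   - (if 1 \<le> s \<and> s + 1 \<le> m \<and> t = i - s \<and> inI n s t then 1 else 0)"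

lemma sum_unit_e_antidiagonal:
  "(\<Sum>t = 1..m. unit_e n t (i + 1 - t) s' t') =
     (if 1 \<le> s' \<and> s' \<le> m \<and> t' = i + 1 - s' \<and> inI n s' t' then 1 else 0)"
proof -
  have "(\<Sum>t = 1..m. unit_e n t (i + 1 - t) s' t') =
        (\<Sum>t = 1..m. if t = s' then (if inI n s' t' \<and> t' = i + 1 - s' then 1 else 0) else 0)"
    by (rule sum.cong) (auto simp: unit_e_def)
  then show ?thesis
    by auto
qed

lemma sum_unit_e_subantidiagonal:
  "(\<Sum>t = 1..m. unit_e n (t - 1) (i + 1 - t) s' t') =
     (if 1 \<le> s' \<and> s' + 1 \<le> m \<and> t' = i - s' \<and> inI n s' t' then 1 else 0)"
proof -
  have "(\<Sum>t = 1..m. unit_e n (t - 1) (i + 1 - t) s' t') =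
        (\<Sum>t = 1..m. if t = s' + 1 then (if inI n s' t' \<and> t' = i - s' then 1 else 0) else 0)"
    by (rule sum.cong) (auto simp: unit_e_def inI_def)
  then show ?thesis
    by (auto simp: inI_def)
qed

lemma f_string_apply: "f_string n i m b s t = b s t + f_string_delta n i m s t"
  unfolding f_string_def f_string_delta_def sum_subtractf
    sum_unit_e_antidiagonal sum_unit_e_subantidiagonal
  by simp

lemma bv_f_string: "bv n (f_string n i m b) s t = bv n b s t + f_string_delta n i m s t"
  unfolding bv_def f_string_apply f_string_delta_def by auto

definition partial_star_shift :: "nat \<Rightarrow> nat \<Rightarrow> int" where
  "partial_star_shift m t =
     (if m = 1 then (if t = 1 then 1 else if t = 2 then -1 else 0)
      else if t = 1 then 2 else if t = m \<or> t = m + 1 then -1 else 0)"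

lemma f_string_delta_neighbours:
  assumes "1 \<le> t" "t \<le> i" "m \<le> i" "i \<le> n"
  shows "f_string_delta n i m (t - 1) (i + 1 - t) = (if 2 \<le> t \<and> t \<le> m then -1 else 0)"
    and "f_string_delta n i m (t - 1) (i + 1 - t + 1) = (if 2 \<le> t \<and> t \<le> m + 1 then 1 else 0)"
    and "f_string_delta n i m t (i + 1 - t - 1) = (if t + 1 \<le> m then -1 else 0)"
    and "f_string_delta n i m t (i + 1 - t) = (if t \<le> m then 1 else 0)"
  using assms unfolding f_string_delta_def inI_def by auto

lemma partial_star_f_string:
  assumes "1 \<le> m" "m \<le> i" "i \<le> n" "1 \<le> t" "t \<le> i"
  shows "partial_star n (f_string n i m b) t (i + 1 - t) =
           partial_star n b t (i + 1 - t) + partial_star_shift m t"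
  using assms
  unfolding partial_star_def bv_f_string f_string_delta_neighbours[OF assms(4,5,2,3)]
    partial_star_shift_def
  by auto

lemma sum_partial_star_shift:
  assumes "1 \<le> m"
  shows "(\<Sum>t = 1..s. partial_star_shift m t) =
           (if s = 0 then 0
            else if m = 1 then (if s = 1 then 1 else 0)
            else if s < m then 2 else if s = m then 1 else 0)"
proof (induction s)
  case 0
  then show ?case by simp
next
  case (Suc s)
  then show ?case
    using assms by (cases s) (auto simp: partial_star_shift_def)
qed

lemma Sigma_star_f_string:
  assumes "1 \<le> m" "m \<le> i" "i \<le> n" "s \<le> i"
  shows "Sigma_star n i (f_string n i m b) s =
           Sigma_star n i b s +
           (if s = 0 then 0
            else if m = 1 then (if s = 1 then 1 else 0)
            else if s < m then 2 else if s = m then 1 else 0)"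
proof -
  have "Sigma_star n i (f_string n i m b) s =
          (\<Sum>t = 1..s. partial_star n b t (i + 1 - t)) + (\<Sum>t = 1..s. partial_star_shift m t)"
    unfolding Sigma_star_def sum.distrib[symmetric] using assms
    by (intro sum.cong refl partial_star_f_string) auto
  then show ?thesis
    unfolding Sigma_star_def sum_partial_star_shift[OF assms(1)] .
qed

lemma m_star_bounds:
  assumes "1 \<le> i"
  shows "1 \<le> m_star n i b" and "m_star n i b \<le> i"
proof -
  let ?S = "(\<lambda>l. Sigma_star n i b l) ` {1..i}"
  have "Max ?S \<in> ?S"
    using assms by (intro Max_in) auto
  then obtain k where k: "k \<in> {1..i}" "Sigma_star n i b k = Max ?S"
    by auto
  have "1 \<le> m_star n i b \<and> m_star n i b \<le> i \<and> Sigma_star n i b (m_star n i b) = Max ?S"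
    unfolding m_star_def by (rule LeastI[of _ k]) (use k in auto)
  then show "1 \<le> m_star n i b" and "m_star n i b \<le> i"
    by auto
qed

theorem lemma6p5:
  fixes n i :: nat and b :: "nat \<Rightarrow> nat \<Rightarrow> int"
  assumes "1 \<le> n" and "1 \<le> i" and "i \<le> n" and "b \<in> Binf n"
  shows "(m_star n i b = 1 \<longrightarrow>
            (\<forall>s. 1 \<le> s \<and> s \<le> i \<longrightarrow>
               Sigma_star n i (f_star n i b) s =
                 Sigma_star n i b s + (if s = 1 then 1 else 0)))
       \<and> (\<forall>k. 2 \<le> k \<and> m_star n i b = k \<longrightarrow>
            (\<forall>s. 1 \<le> s \<and> s \<le> i \<longrightarrow>
               Sigma_star n i (f_star n i b) s =
                 Sigma_star n i b s + (if s < k then 2 else if s = k then 1 else 0)))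
       \<and> Sigma_star n i (f_star n i b) (m_star n i b) = Sigma_star n i b (m_star n i b) + 1"
proof -
  note m_bounds = m_star_bounds[OF \<open>1 \<le> i\<close>, of n b]
  have "Sigma_star n i (f_star n i b) s = Sigma_star n i b s +
          (if s = 0 then 0
           else if m_star n i b = 1 then (if s = 1 then 1 else 0)
           else if s < m_star n i b then 2 else if s = m_star n i b then 1 else 0)"
    if "s \<le> i" for s
    unfolding f_star_eq_f_string
    using Sigma_star_f_string[OF m_bounds \<open>i \<le> n\<close> that] .
  then show ?thesis
    using m_bounds by auto
qed

end
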